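(* If $\mathbf M\in\mathcal M_1$, then every component of $\liminf_{n\to\infty}\mathbf M^n\mathbf 1^T$ is finite, i.e. $\liminf_{n\to\infty}\sum_{j\in\mathbb N}M^{(n)}_{ij}<\infty$ for every $i\in\mathbb N$. If $\mathbf M\in\mathcal M_1^0$, then there is a constant $C\in(0,\infty)$ such that $$M_i^{(n)}:=\sum_{j\in\mathbb N}M^{(n)}_{ij}\le Cu_i\le CU<\infty\quad\text{for all } i,n\in\mathbb N.$$
   Context: A GWBP/$\infty$ has types $\mathbb N=\{1,2,\dots\}$; a type-$i$ particle produces a random vector $\mathbf Z_i=(Z_{ij})_{j\in\mathbb N}$ of children with $Z_i:=\sum_jZ_{ij}<\infty$ a.s.; $\mathbf Z_i(n)=(Z_{ij}(n))_j$ is the generation-$n$ population from one type-$i$ particle. Mean matrix $\mathbf M=(M_{ij})$, $M_{ij}=\mathbb EZ_{ij}$, $\mathbf M^n=(M^{(n)}_{ij})$ with $M^{(n)}_{ij}=\mathbb EZ_{ij}(n)$, $M_i=\sum_jM_{ij}=\mathbb EZ_i$. Irreducible: for all $i,j$ some $M^{(n)}_{ij}>0$; aperiodic: gcd of such $n$ is 1; then $\lim_n(M^{(n)}_{ij})^{1/n}=1/R$ for a common $R$. $\mathbf M\in\mathcal M_1$ means: (i) irreducible, aperiodic, $R=1$, 1-recurrent ($\sum_nM^{(n)}_{ij}=\infty$) and 1-positive ($\lim_nM^{(n)}_{ij}>0$ for all $i,j$); then there are positive eigenvectors $\mathbf v\mathbf M=\mathbf v$, $\mathbf M\mathbf u^T=\mathbf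 u^T$, unique up to positive multiples, normalized with $\sum_jv_ju_j=1$; (ii) $\sum_jv_j=1$ and $U:=\sup_iu_i<\infty$; (iii) $\lim_{N\to\infty}\sup_iM_i^{-1}\sum_{j>N}M_{ij}=0$ and $\lim_{K\to\infty}\sup_iM_i^{-1}\mathbb E[Z_i;Z_i>K]=0$. $\mathbf M\in\mathcal M_1^0$ means $\mathbf M\in\mathcal M_1$ and (iv) there exist $m\in\mathbb N$, $c,C>0$ with $M_{ij}<Cu_iv_j$ and $M^{(m)}_{1j}>cv_j$ for all $i,j$. *)

theory Defs
  imports "HOL-Probability.Probability"
begin

text \<open>Types are labelled 0,1,2,... (the paper's type k is our type k-1).
  The offspring law of a type-i particle is a pmf on offspring vectors
  z :: nat => nat (z j = number of type-j children).  Since Z_i is a.s. finite,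
  the law is concentrated on finitely supported vectors, a countable set, so a
  pmf describes it without loss of generality.\<close>

type_synonym offspring = "nat \<Rightarrow> (nat \<Rightarrow> nat) pmf"

definition offspring_finite :: "offspring \<Rightarrow> bool" where
  "offspring_finite P \<longleftrightarrow> (\<forall>i. \<forall>z\<in>set_pmf (P i). finite {j. z j \<noteq> 0})"

definition Ztot :: "(nat \<Rightarrow> nat) \<Rightarrow> nat" where
  "Ztot z = (\<Sum>j\<in>{j. z j \<noteq> 0}. z j)"

definition mean_mat :: "offspring \<Rightarrow> nat \<Rightarrow> nat \<Rightarrow> ennreal" where
  "mean_mat P i j = (\<integral>\<^sup>+ z. of_nat (z j) \<partial>measure_pmf (P i))"

definition mean_row :: "offspring \<Rightarrow> nat \<Rightarrow> ennreal" where
  "mean_row P i = (\<Sum>j. mean_mat P i j)"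

fun Mpow :: "(nat \<Rightarrow> nat \<Rightarrow> ennreal) \<Rightarrow> nat \<Rightarrow> nat \<Rightarrow> nat \<Rightarrow> ennreal" where
  "Mpow M 0 i j = (if i = j then 1 else 0)"
| "Mpow M (Suc n) i j = (\<Sum>k. Mpow M n i k * M k j)"

definition irreducible_mat :: "(nat \<Rightarrow> nat \<Rightarrow> ennreal) \<Rightarrow> bool" where
  "irreducible_mat M \<longleftrightarrow> (\<forall>i j. \<exists>n\<ge>1. Mpow M n i j > 0)"

definition aperiodic_mat :: "(nat \<Rightarrow> nat \<Rightarrow> ennreal) \<Rightarrow> bool" where
  "aperiodic_mat M \<longleftrightarrow> (\<forall>i. Gcd {n. n \<ge> 1 \<and> Mpow M n i i > 0} = 1)"

definition conv_param_one :: "(nat \<Rightarrow> nat \<Rightarrow> ennreal) \<Rightarrow> bool" where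
  "conv_param_one M \<longleftrightarrow> (\<forall>i j. (\<lambda>n. root n (enn2real (Mpow M n i j))) \<longlonglongrightarrow> 1)"

definition one_recurrent :: "(nat \<Rightarrow> nat \<Rightarrow> ennreal) \<Rightarrow> bool" where
  "one_recurrent M \<longleftrightarrow> (\<forall>i j. (\<Sum>n. Mpow M n i j) = \<infinity>)"

definition one_positive :: "(nat \<Rightarrow> nat \<Rightarrow> ennreal) \<Rightarrow> bool" where
  "one_positive M \<longleftrightarrow> (\<forall>i j. \<exists>L>0. (\<lambda>n. Mpow M n i j) \<longlonglongrightarrow> L)"

definition eigvecs :: "(nat \<Rightarrow> nat \<Rightarrow> ennreal) \<Rightarrow> (nat \<Rightarrow> real) \<Rightarrow> (nat \<Rightarrow> real) \<Rightarrow> bool" where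
  "eigvecs M u v \<longleftrightarrow>
     (\<forall>i. u i > 0) \<and> (\<forall>j. v j > 0) \<and>
     (\<forall>j. (\<Sum>i. ennreal (v i) * M i j) = ennreal (v j)) \<and>
     (\<forall>i. (\<Sum>j. M i j * ennreal (u j)) = ennreal (u i)) \<and>
     (\<Sum>j. ennreal (v j * u j)) = 1"

definition trunc_mean :: "offspring \<Rightarrow> nat \<Rightarrow> nat \<Rightarrow> ennreal" where
  "trunc_mean P i K = (\<integral>\<^sup>+ z. (if Ztot z > K then of_nat (Ztot z) else 0) \<partial>measure_pmf (P i))"

definition class_M1 :: "offspring \<Rightarrow> (nat \<Rightarrow> real) \<Rightarrow> (nat \<Rightarrow> real) \<Rightarrow> bool" where
  "class_M1 P u v \<longleftrightarrow>
     (let M = mean_mat P in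
      \<comment> \<open>(i)\<close>
      irreducible_mat M \<and> aperiodic_mat M \<and> conv_param_one M \<and>
      one_recurrent M \<and> one_positive M \<and> eigvecs M u v \<and>
      \<comment> \<open>(ii)\<close>
      (\<Sum>j. ennreal (v j)) = 1 \<and> bdd_above (range u) \<and>
      \<comment> \<open>(iii) (M_i finite, so that the ratios make sense)\<close>
      (\<forall>i. mean_row P i < \<infinity>) \<and>
      (\<lambda>N. \<Squnion>i. (\<Sum>j. if j > N then M i j else 0) / mean_row P i) \<longlonglongrightarrow> 0 \<and>
      (\<lambda>K. \<Squnion>i. trunc_mean P i K / mean_row P i) \<longlonglongrightarrow> 0)"

text \<open>the class M_1^0 (type 1 of the paper is our type 0)\<close>
definition class_M10 :: "offspring \<Rightarrow> (nat \<Rightarrow> real) \<Rightarrow> (nat \<Rightarrow> real) \<Rightarrow> bool" where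
  "class_M10 P u v \<longleftrightarrow> class_M1 P u v \<and>
     (\<exists>m::nat. \<exists>c C::real. m \<ge> 1 \<and> c > 0 \<and> C > 0 \<and>
        (\<forall>i j. mean_mat P i j < ennreal (C * u i * v j)) \<and>
        (\<forall>j. Mpow (mean_mat P) m 0 j > ennreal (c * v j)))"

end

theory Submission
  imports Defs
begin

text \<open>Everything follows from the right eigenvector, \<open>M\<^sup>n u = u\<close>, which gives
  \<open>M\<^sup>n i j \<le> u i / u j\<close>. For \<open>\<M>\<^sub>1\<close>, the uniform tail condition (iii) yields an
  \<open>N\<close> such that every row sum \<open>M\<^sub>k\<close> is at most twice its part over \<open>j \<le> N\<close>; then
  \<open>\<Sum>\<^sub>j M\<^bsup>n+1\<^esup> i j = \<Sum>\<^sub>k M\<^sup>n i k M\<^sub>k \<le> 2 \<Sum>\<^bsub>j\<le>N\<^esub> M\<^bsup>n+1\<^esup> i j \<le> 2 \<Sum>\<^bsub>j\<le>N\<^esub> u i / u j\<close>,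
  a bound independent of \<open>n\<close>. For \<open>\<M>\<^sub>1\<^sup>0\<close>, \<open>M k j \<le> C u k v j\<close> gives
  \<open>M\<^bsup>n+1\<^esup> i j \<le> C v j \<Sum>\<^sub>k M\<^sup>n i k u k = C u i v j\<close>, and \<open>\<Sum>\<^sub>j v j = 1\<close> gives
  the row bound \<open>C u i\<close>. Only the mean matrix enters.\<close>

lemma suminf_ennreal_swap:
  fixes f :: "nat \<Rightarrow> nat \<Rightarrow> ennreal"
  shows "(\<Sum>i. \<Sum>j. f i j) = (\<Sum>j. \<Sum>i. f i j)"
proof -
  interpret pair_sigma_finite "count_space (UNIV::nat set)" "count_space (UNIV::nat set)"
    by (simp add: pair_sigma_finite.intro sigma_finite_measure_count_space)
  have "(\<integral>\<^sup>+ i. \<integral>\<^sup>+ j. f i j \<partial>count_space UNIV \<partial>count_space UNIV) =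
        (\<integral>\<^sup>+ j. \<integral>\<^sup>+ i. f i j \<partial>count_space UNIV \<partial>count_space UNIV)"
    using Fubini'[of f] by (simp add: pair_measure_countable)
  then show ?thesis by (simp add: nn_integral_count_space_nat)
qed

lemma suminf_ennreal_split_initial:
  fixes f :: "nat \<Rightarrow> ennreal"
  shows "(\<Sum>j. f j) = (\<Sum>j\<le>N. f j) + (\<Sum>j. if j > N then f j else 0)"
proof -
  have "(\<Sum>j. if j \<le> N then f j else 0) = (\<Sum>j\<le>N. f j)"
    by (subst suminf_finite[of "{..N}"]) auto
  moreover have "(\<Sum>j. f j) = (\<Sum>j. (if j \<le> N then f j else 0) + (if j > N then f j else 0))"
    by (intro suminf_cong) auto
  ultimately show ?thesis
    by (simp add: suminf_add[symmetric] summableI)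
qed

lemma suminf_ennreal_le_twice_initial:
  fixes f :: "nat \<Rightarrow> ennreal"
  assumes fin: "(\<Sum>j. f j) < \<infinity>"
    and tail: "(\<Sum>j. if j > N then f j else 0) / (\<Sum>j. f j) < 1/2"
  shows "(\<Sum>j. f j) \<le> 2 * (\<Sum>j\<le>N. f j)"
proof (cases "(\<Sum>j. f j) = 0")
  case False
  define S T where "S = (\<Sum>j. f j)" and "T = (\<Sum>j. if j > N then f j else 0)"
  have "T = T / S * S"
    using False fin by (simp add: S_def ennreal_divide_times)
  also have "\<dots> < 1/2 * S"
    using False fin tail unfolding S_def T_def
    by (intro ennreal_mult_strict_right_mono) (auto simp: zero_less_iff_neq_zero)
  finally have "2 * T \<le> 2 * (1/2 * S)" by (intro mult_left_mono) auto
  then have "2 * T \<le> S" by (simp add: mult.assoc[symmetric] ennreal_times_divide)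
  have "S = (\<Sum>j\<le>N. f j) + T"
    unfolding S_def T_def by (rule suminf_ennreal_split_initial)
  then have "S + S = 2 * (\<Sum>j\<le>N. f j) + 2 * T"
    by (simp add: mult_2 add_ac)
  also have "\<dots> \<le> 2 * (\<Sum>j\<le>N. f j) + S"
    using \<open>2 * T \<le> S\<close> by (rule add_left_mono)
  finally have "S + S \<le> S + 2 * (\<Sum>j\<le>N. f j)"
    by (simp add: add_ac)
  then show ?thesis
    using fin unfolding S_def[symmetric] ennreal_add_left_cancel_le by auto
qed simp

lemma Mpow_Suc_mult_suminf:
  "(\<Sum>j. Mpow M (Suc n) i j * (g j :: ennreal)) = (\<Sum>k. Mpow M n i k * (\<Sum>j. M k j * g j))"
proof -
  have "(\<Sum>j. Mpow M (Suc n) i j * g j) = (\<Sum>j. \<Sum>k. Mpow M n i k * (M k j * g j))"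
    by (simp only: Mpow.simps ennreal_suminf_multc[symmetric] mult.assoc)
  also have "\<dots> = (\<Sum>k. \<Sum>j. Mpow M n i k * (M k j * g j))"
    by (rule suminf_ennreal_swap)
  finally show ?thesis by simp
qed

lemma Mpow_right_eigvec:
  assumes eig: "\<And>i. (\<Sum>j. M i j * ennreal (u j)) = ennreal (u i)"
  shows "(\<Sum>j. Mpow M n i j * ennreal (u j)) = ennreal (u i)"
proof (induction n arbitrary: i)
  case 0
  have "(\<lambda>j. Mpow M 0 i j * ennreal (u j)) = (\<lambda>j. if j = i then ennreal (u j) else 0)"
    by auto
  then show ?case using sums_single[of i "\<lambda>j. ennreal (u j)"] by (simp add: sums_iff)
next
  case (Suc n)
  then show ?case by (simp only: Mpow_Suc_mult_suminf eig)
qed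

lemma Mpow_le_eigvec_ratio:
  assumes eig: "\<And>i. (\<Sum>j. M i j * ennreal (u j)) = ennreal (u i)"
    and "u j > 0" "u i \<ge> 0"
  shows "Mpow M n i j \<le> ennreal (u i / u j)"
proof -
  have le: "Mpow M n i j * ennreal (u j) \<le> ennreal (u i)"
    using Mpow_right_eigvec[OF eig, of n i]
      sum_le_suminf[of "\<lambda>j. Mpow M n i j * ennreal (u j)" "{j}"] by (simp add: summableI)
  then have "Mpow M n i j \<noteq> \<infinity>"
    using \<open>u j > 0\<close> by (auto simp: ennreal_mult_top top_unique)
  then obtain y where y: "Mpow M n i j = ennreal y" "y \<ge> 0"
    by (cases "Mpow M n i j") auto
  have "y * u j \<le> u i"
    using le y assms by (simp add: ennreal_mult''[symmetric] ennreal_le_iff)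
  then have "y \<le> u i / u j"
    using \<open>u j > 0\<close> by (simp add: field_simps)
  then show ?thesis
    using y by simp
qed

lemma Mpow_Suc_row_sum_le_initial:
  fixes M :: "nat \<Rightarrow> nat \<Rightarrow> ennreal"
  assumes eig: "\<And>i. (\<Sum>j. M i j * ennreal (u j)) = ennreal (u i)"
    and upos: "\<And>k. u k > 0"
    and head: "\<And>k. (\<Sum>j. M k j) \<le> 2 * (\<Sum>j\<le>N. M k j)"
  shows "(\<Sum>j. Mpow M (Suc n) i j) \<le> 2 * (\<Sum>j\<le>N. ennreal (u i / u j))"
proof -
  have "(\<Sum>j. Mpow M (Suc n) i j) = (\<Sum>k. Mpow M n i k * (\<Sum>j. M k j))"
    using Mpow_Suc_mult_suminf[of M n i "\<lambda>_. 1"] by simp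
  also have "\<dots> \<le> (\<Sum>k. Mpow M n i k * (2 * (\<Sum>j\<le>N. M k j)))"
    by (intro suminf_le mult_left_mono head) (auto intro: summableI)
  also have "\<dots> = (\<Sum>k. 2 * (\<Sum>j\<le>N. Mpow M n i k * M k j))"
    by (simp add: sum_distrib_left mult_ac)
  also have "\<dots> = 2 * (\<Sum>j\<le>N. \<Sum>k. Mpow M n i k * M k j)"
    by (simp add: ennreal_suminf_cmult suminf_sum summableI)
  also have "\<dots> = 2 * (\<Sum>j\<le>N. Mpow M (Suc n) i j)"
    by simp
  also have "\<dots> \<le> 2 * (\<Sum>j\<le>N. ennreal (u i / u j))"
    using upos by (intro mult_left_mono sum_mono Mpow_le_eigvec_ratio[OF eig]) (auto intro: less_imp_le)
  finally show ?thesis .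
qed

lemma liminf_Mpow_row_sum_finite:
  fixes M :: "nat \<Rightarrow> nat \<Rightarrow> ennreal"
  assumes eig: "\<And>i. (\<Sum>j. M i j * ennreal (u j)) = ennreal (u i)"
    and upos: "\<And>k. u k > 0"
    and head: "\<And>k. (\<Sum>j. M k j) \<le> 2 * (\<Sum>j\<le>N. M k j)"
  shows "liminf (\<lambda>n. \<Sum>j. Mpow M n i j) < \<infinity>"
proof -
  define B where "B = 2 * (\<Sum>j\<le>N. ennreal (u i / u j))"
  have "eventually (\<lambda>n. (\<Sum>j. Mpow M n i j) \<le> B) sequentially"
    unfolding eventually_sequentially B_def
    using Mpow_Suc_row_sum_le_initial[OF eig upos head]
    by (metis Suc_le_D)
  then have "liminf (\<lambda>n. \<Sum>j. Mpow M n i j) \<le> liminf (\<lambda>_. B)"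
    by (rule Liminf_mono)
  also have "\<dots> = B"
    by (simp add: Liminf_const)
  also have "\<dots> < \<infinity>"
    by (simp add: B_def ennreal_mult_less_top sum_ennreal[symmetric] del: sum_ennreal)
  finally show ?thesis .
qed

lemma class_M1_row_sum_le_initial:
  assumes "class_M1 P u v"
  shows "\<exists>N. \<forall>k. mean_row P k \<le> 2 * (\<Sum>j\<le>N. mean_mat P k j)"
proof -
  define tail where "tail N k = (\<Sum>j. if j > N then mean_mat P k j else 0) / mean_row P k" for N k
  have "(\<lambda>N. \<Squnion>k. tail N k) \<longlonglongrightarrow> 0"
    using assms by (simp add: class_M1_def Let_def tail_def)
  then have "eventually (\<lambda>N. (\<Squnion>k. tail N k) < 1/2) sequentially"
    by (rule order_tendstoD(2)) (simp add: ennreal_zero_less_divide)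
  then obtain N where tail_N: "\<And>k. tail N k < 1/2"
    by (auto simp: eventually_sequentially intro: le_less_trans[OF SUP_upper])
  have fin: "\<And>k. mean_row P k < \<infinity>"
    using assms by (simp add: class_M1_def Let_def)
  have "mean_row P k \<le> 2 * (\<Sum>j\<le>N. mean_mat P k j)" for k
    using suminf_ennreal_le_twice_initial[OF fin[of k, unfolded mean_row_def]]
      tail_N[of k, unfolded tail_def mean_row_def]
    unfolding mean_row_def by blast
  then show ?thesis
    by blast
qed

lemma Mpow_Suc_le_eigvec_product:
  assumes eig: "\<And>i. (\<Sum>j. M i j * ennreal (u j)) = ennreal (u i)"
    and le: "\<And>k j. M k j \<le> ennreal (C * u k * v j)"
    and pos: "C \<ge> 0" "\<And>k. u k \<ge> 0" "\<And>j. v j \<ge> 0"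
  shows "Mpow M (Suc n) i j \<le> ennreal (C * u i * v j)"
proof -
  have "Mpow M (Suc n) i j = (\<Sum>k. Mpow M n i k * M k j)"
    by simp
  also have "\<dots> \<le> (\<Sum>k. Mpow M n i k * ennreal (u k) * ennreal (C * v j))"
  proof (rule suminf_le)
    fix k
    have "M k j \<le> ennreal (u k) * ennreal (C * v j)"
      using le[of k j] pos by (simp add: ennreal_mult''[symmetric] mult_ac)
    then show "Mpow M n i k * M k j \<le> Mpow M n i k * ennreal (u k) * ennreal (C * v j)"
      by (simp add: mult.assoc mult_left_mono)
  qed (auto intro: summableI)
  also have "\<dots> = ennreal (u i) * ennreal (C * v j)"
    using Mpow_right_eigvec[OF eig, of n i] by simp
  also have "\<dots> = ennreal (C * u i * v j)"
    using pos by (simp add: ennreal_mult''[symmetric] mult_ac)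
  finally show ?thesis .
qed

lemma Mpow_Suc_row_sum_le_eigvec:
  assumes eig: "\<And>i. (\<Sum>j. M i j * ennreal (u j)) = ennreal (u i)"
    and le: "\<And>k j. M k j \<le> ennreal (C * u k * v j)"
    and pos: "C \<ge> 0" "\<And>k. u k \<ge> 0" "\<And>j. v j \<ge> 0"
    and v_sum: "(\<Sum>j. ennreal (v j)) = 1"
  shows "(\<Sum>j. Mpow M (Suc n) i j) \<le> ennreal (C * u i)"
proof -
  have "(\<Sum>j. Mpow M (Suc n) i j) \<le> (\<Sum>j. ennreal (C * u i) * ennreal (v j))"
    using Mpow_Suc_le_eigvec_product[OF eig le pos] pos
    by (intro suminf_le) (auto intro: summableI simp: ennreal_mult''[symmetric])
  also have "\<dots> = ennreal (C * u i)"
    using v_sum by simp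
  finally show ?thesis .
qed

lemma class_M1_liminf_Mpow_row_sum_finite:
  assumes "class_M1 P u v"
  shows "liminf (\<lambda>n. \<Sum>j. Mpow (mean_mat P) n i j) < \<infinity>"
proof -
  obtain N where "\<And>k. mean_row P k \<le> 2 * (\<Sum>j\<le>N. mean_mat P k j)"
    using class_M1_row_sum_le_initial[OF assms] by blast
  with assms show ?thesis
    by (intro liminf_Mpow_row_sum_finite[where u = u and N = N])
      (auto simp: class_M1_def eigvecs_def Let_def mean_row_def)
qed

lemma class_M10_Mpow_row_sum_le:
  assumes "class_M10 P u v"
  shows "\<exists>C>0. \<forall>i n. n \<ge> 1 \<longrightarrow> (\<Sum>j. Mpow (mean_mat P) n i j) \<le> ennreal (C * u i)"
proof -
  obtain C :: real where C: "C > 0" and le: "\<And>i j. mean_mat P i j < ennreal (C * u i * v j)"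
    using assms by (auto simp: class_M10_def)
  have row: "(\<Sum>j. Mpow (mean_mat P) (Suc n) i j) \<le> ennreal (C * u i)" for n i
    using assms C by (intro Mpow_Suc_row_sum_le_eigvec[where v = v] less_imp_le[OF le])
      (auto simp: class_M10_def class_M1_def eigvecs_def Let_def less_imp_le)
  show ?thesis
  proof (intro exI[of _ C] conjI allI impI)
    fix i n :: nat assume "n \<ge> 1"
    then obtain m where "n = Suc m"
      by (cases n) auto
    then show "(\<Sum>j. Mpow (mean_mat P) n i j) \<le> ennreal (C * u i)"
      using row by (simp only:)
  qed (rule C)
qed

theorem lemma1:
  fixes P :: offspring and u v :: "nat \<Rightarrow> real"
  assumes "offspring_finite P"
  shows "(class_M1 P u v \<longrightarrow>
            (\<forall>i. liminf (\<lambda>n. \<Sum>j. Mpow (mean_mat P) n i j) < \<infinity>)) \<and>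
         (class_M10 P u v \<longrightarrow>
            (\<exists>C::real. C > 0 \<and>
               (\<forall>i n. n \<ge> 1 \<longrightarrow>
                  (\<Sum>j. Mpow (mean_mat P) n i j) \<le> ennreal (C * u i) \<and>
                  C * u i \<le> C * (SUP k. u k))))"
proof (intro conjI impI allI)
  fix i assume "class_M1 P u v"
  then show "liminf (\<lambda>n. \<Sum>j. Mpow (mean_mat P) n i j) < \<infinity>"
    by (rule class_M1_liminf_Mpow_row_sum_finite)
next
  assume M10: "class_M10 P u v"
  then obtain C :: real where "C > 0"
    and row: "\<And>i n. n \<ge> 1 \<Longrightarrow> (\<Sum>j. Mpow (mean_mat P) n i j) \<le> ennreal (C * u i)"
    using class_M10_Mpow_row_sum_le by blast
  moreover have "C * u i \<le> C * (SUP k. u k)" for i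
    using M10 \<open>C > 0\<close> by (intro mult_left_mono cSUP_upper) (auto simp: class_M10_def class_M1_def Let_def)
  ultimately show "\<exists>C::real. C > 0 \<and> (\<forall>i n. n \<ge> 1 \<longrightarrow>
      (\<Sum>j. Mpow (mean_mat P) n i j) \<le> ennreal (C * u i) \<and> C * u i \<le> C * (SUP k. u k))"
    by blast
qed

end
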